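(* Let $M\in\mathrm{SL}(2,\mathbb Z)$ be a hyperbolic matrix, $N\in\mathbb N$, and $\{\phi_j\}_{j=1}^N$ an eigenbasis of $\hat M$ in $\mathcal H_N$ (setting in the context). Let $1\le p<\infty$, $L>0$, and let $D=D(r)$ satisfy $1/D=o(r)$ as $r\to0$; let $b^\pm_{x,r}$ be the majorant/minorant trigonometric polynomials of the discs $B_2(x,r)\subset\mathbb T^2$ described in the context. Define $$\mathcal S^\pm(N,L):=\Big\{1\le j\le N:\ \sup_{x\in\mathbb T^2}\Big|\frac{\langle\mathrm{Op}_N(b^\pm_{x,r})\phi_j,\phi_j\rangle}{\mu(b^\pm_{x,r})}-1\Big|\ge L\Big\}.$$ Then $$\frac{\#\mathcal S^\pm(N,L)}{N}\le\frac{c\,D^{2(p-1)}}{L^p}\sum_{n\in\mathbb Z^2,\,1\le|n|\le D}V_p\big(N,\hat T_N(n)\big),$$ where $c$ depends on $p$.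
   Context: $M=\exp\begin{pmatrix}\gamma&\beta\\-\alpha&-\gamma\end{pmatrix}\in\mathrm{SL}(2,\mathbb Z)$, $\gamma^2>\alpha\beta$, acting on row vectors of $\mathbb T^2=\mathbb R^2/\mathbb Z^2$. Symplectic product $u\wedge v=u_2v_1-u_1v_2$. With $h=1/N$: $\hat q\psi=q\psi$, $\hat p\psi=\frac{h}{2\pi i}\psi'$, $\hat T_v=\exp(-\frac{2\pi i}{h}(v_1\hat p-v_2\hat q))$, $\hat H=\frac12\alpha\hat q^2+\frac12\beta\hat p^2+\frac\gamma2(\hat q\hat p+\hat p\hat q)$, $\hat M=e^{-2\pi i\hat H/h}$ acting on the $N$-dimensional Hilbert space $\mathcal H_N$ of distributions $\psi(q)=\sum_{k\in\mathbb Z}\Psi(k)\delta(q-(k+\kappa_1)/N)$, $\Psi(k+N)=e^{-2\pi i\kappa_2}\Psi(k)$ (fixed $\kappa\in\mathbb T^2$ chosen so that $\hat M$ preserves $\mathcal H_N$), inner product $\frac1N\sum_{k=1}^N\Psi(k)\overline{\Phi(k)}$; an eigenbasis is an orthonormal basis of eigenvectors of $\hat M$. $\hat T_N(n):=\hat T_{n/N}$; $\mathrm{Op}_N(a)=\sum_n\tilde a(n)\hat T_N(n)$ for $a(x)=\sum_n\tilde a(n)e^{2\pi i(n\wedge x)}$; $\mu(a)=\int_{\mathbb T^2}a\,dq\,dp=\tilde a(0)$. $p$-moment: $V_p(N,\hat T_N(n)):=\frac1N\sum_{j=1}^N|\langle\hat T_N(n)\phi_j,\phi_j\rangle-\mu(e^{2\pi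 i(n\wedge\cdot)})|^p$, which for $n\neq0$ equals $\frac1N\sum_j|\langle\hat T_N(n)\phi_j,\phi_j\rangle|^p$. Majorants/minorants: with $rD\ge1$, $a_r^\pm$ are trigonometric polynomials on $\mathbb T^2$ with $a_r^-\le\chi_{B_2(0,r)}\le a_r^+$, $\widetilde{a_r^\pm}(n)=0$ for $|n|\ge D$, $\widetilde{a_r^\pm}(0)=\mathrm{Vol}(B_2(0,r))+O(r/D)$, $|\widetilde{a_r^\pm}(n)|\le c_0r^2$ for all $n$ with an absolute constant $c_0$; $b^\pm_{x,r}(y):=a_r^\pm(y-x)$. *)

theory Defs
  imports "HOL-Analysis.Analysis" "HOL-Library.Landau_Symbols"
begin

text \<open>Lattice points n in Z^2 are row vectors of type int^2; points of the torus
  R^2/Z^2 are represented by points of R^2 (all functions below are Z^2-periodic).\<close>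

definition inorm :: "int^2 \<Rightarrow> real" where
  "inorm n = sqrt (real_of_int (n$1)^2 + real_of_int (n$2)^2)"

definition wedge :: "int^2 \<Rightarrow> real^2 \<Rightarrow> real" where
  "wedge u v = real_of_int (u$2) * v$1 - real_of_int (u$1) * v$2"

text \<open>M = exp of a traceless real matrix with gamma^2 > alpha beta, M in SL(2,Z):
  equivalently det M = 1 and trace M > 2 (hyperbolic, positive trace).\<close>
definition hyperbolic_SL2Z :: "int^2^2 \<Rightarrow> bool" where
  "hyperbolic_SL2Z M \<longleftrightarrow> det M = 1 \<and> trace M > 2"

definition coeff_supp :: "(int^2 \<Rightarrow> complex) \<Rightarrow> (int^2) set" where
  "coeff_supp c = {n. c n \<noteq> 0}"

definition trig_eval :: "(int^2 \<Rightarrow> complex) \<Rightarrow> real^2 \<Rightarrow> complex" where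
  "trig_eval c x = (\<Sum>n\<in>coeff_supp c. c n * exp (2 * pi * \<i> * complex_of_real (wedge n x)))"

text \<open>Fourier coefficients of the translate y \<mapsto> a(y - x) (the function b_{x,r}).\<close>
definition shift_coeff :: "(int^2 \<Rightarrow> complex) \<Rightarrow> real^2 \<Rightarrow> int^2 \<Rightarrow> complex" where
  "shift_coeff c x n = c n * exp (- 2 * pi * \<i> * complex_of_real (wedge n x))"

definition disc_ind :: "real \<Rightarrow> real^2 \<Rightarrow> real" where
  "disc_ind r x = (if \<exists>k::int^2. (x$1 - real_of_int (k$1))^2 + (x$2 - real_of_int (k$2))^2 < r^2
                   then 1 else 0)"

text \<open>mu(a) = integral of a over the torus = zeroth Fourier coefficient.\<close>
definition mu :: "(int^2 \<Rightarrow> complex) \<Rightarrow> complex" where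
  "mu c = c 0"

text \<open>Required for 0 < r <= 1/2 (so that Vol(B_2(0,r)) = pi r^2) with r D(r) >= 1.\<close>
definition majorant_family ::
  "real \<Rightarrow> real \<Rightarrow> (real \<Rightarrow> real) \<Rightarrow> (real \<Rightarrow> int^2 \<Rightarrow> complex) \<Rightarrow> (real \<Rightarrow> int^2 \<Rightarrow> complex) \<Rightarrow> bool"
  where
  "majorant_family c0 C1 D ap am \<longleftrightarrow>
     (\<forall>r. 0 < r \<and> r \<le> 1/2 \<and> 1 \<le> r * D r \<longrightarrow>
        (\<forall>x. Im (trig_eval (ap r) x) = 0 \<and> Im (trig_eval (am r) x) = 0 \<and>
             Re (trig_eval (am r) x) \<le> disc_ind r x \<and> disc_ind r x \<le> Re (trig_eval (ap r) x)) \<and>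
        (\<forall>n. D r \<le> inorm n \<longrightarrow> ap r n = 0 \<and> am r n = 0) \<and>
        cmod (ap r 0 - complex_of_real (pi * r^2)) \<le> C1 * r / D r \<and>
        cmod (am r 0 - complex_of_real (pi * r^2)) \<le> C1 * r / D r \<and>
        (\<forall>n. cmod (ap r n) \<le> c0 * r^2 \<and> cmod (am r n) \<le> c0 * r^2))"

text \<open>Elements of H_N are represented by their coefficient sequences Psi : Z \<Rightarrow> C,
  psi(q) = sum_k Psi(k) delta(q - (k + kappa1)/N), with Psi(k+N) = e^{-2 pi i kappa2} Psi(k).\<close>
definition inHN :: "nat \<Rightarrow> real^2 \<Rightarrow> (int \<Rightarrow> complex) \<Rightarrow> bool" where
  "inHN N \<kappa> \<Psi> \<longleftrightarrow> (\<forall>k. \<Psi> (k + int N) = exp (- 2 * pi * \<i> * complex_of_real (\<kappa>$2)) * \<Psi> k)"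

definition innerN :: "nat \<Rightarrow> (int \<Rightarrow> complex) \<Rightarrow> (int \<Rightarrow> complex) \<Rightarrow> complex" where
  "innerN N \<Psi> \<Phi> = (1 / of_nat N) * (\<Sum>k=1..int N. \<Psi> k * cnj (\<Phi> k))"

text \<open>T_N(n) = T_{n/N} with h = 1/N, computed on coefficient sequences:
  T_v psi(q) = e^{(2 pi i/h) v2 (q - v1/2)} psi(q - v1).\<close>
definition TN :: "nat \<Rightarrow> real^2 \<Rightarrow> int^2 \<Rightarrow> (int \<Rightarrow> complex) \<Rightarrow> (int \<Rightarrow> complex)" where
  "TN N \<kappa> n \<Psi> = (\<lambda>k. exp (2 * pi * \<i> / of_nat N *
        complex_of_real (real_of_int (n$2) * (real_of_int k + \<kappa>$1)
                         - real_of_int (n$1 * n$2) / 2)) * \<Psi> (k - n$1))"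

definition OpN :: "nat \<Rightarrow> real^2 \<Rightarrow> (int^2 \<Rightarrow> complex) \<Rightarrow> (int \<Rightarrow> complex) \<Rightarrow> (int \<Rightarrow> complex)" where
  "OpN N \<kappa> c \<Psi> = (\<lambda>k. \<Sum>n\<in>coeff_supp c. c n * TN N \<kappa> n \<Psi> k)"

text \<open>U is (a restriction to H_N of) the quantization hat M: a unitary operator of H_N onto
  itself satisfying exact Egorov  U T_N(n) = T_N(nM) U.  By irreducibility of
  n \<mapsto> T_N(n) on H_N this determines U up to a scalar (or up to inversion, for the
  opposite sign convention), hence determines the eigenbases of hat M.\<close>
definition quantizes :: "nat \<Rightarrow> real^2 \<Rightarrow> int^2^2 \<Rightarrow> ((int \<Rightarrow> complex) \<Rightarrow> (int \<Rightarrow> complex)) \<Rightarrow> bool" where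
  "quantizes N \<kappa> M U \<longleftrightarrow>
     (\<forall>\<Psi>. inHN N \<kappa> \<Psi> \<longrightarrow> inHN N \<kappa> (U \<Psi>)) \<and>
     (\<forall>\<Psi> \<Phi> a b. inHN N \<kappa> \<Psi> \<longrightarrow> inHN N \<kappa> \<Phi> \<longrightarrow>
         U (\<lambda>k. a * \<Psi> k + b * \<Phi> k) = (\<lambda>k. a * U \<Psi> k + b * U \<Phi> k)) \<and>
     (\<forall>\<Psi> \<Phi>. inHN N \<kappa> \<Psi> \<longrightarrow> inHN N \<kappa> \<Phi> \<longrightarrow> innerN N (U \<Psi>) (U \<Phi>) = innerN N \<Psi> \<Phi>) \<and>
     (\<forall>\<Phi>. inHN N \<kappa> \<Phi> \<longrightarrow> (\<exists>\<Psi>. inHN N \<kappa> \<Psi> \<and> U \<Psi> = \<Phi>)) \<and>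
     (\<forall>n \<Psi>. inHN N \<kappa> \<Psi> \<longrightarrow> U (TN N \<kappa> n \<Psi>) = TN N \<kappa> (n v* M) (U \<Psi>))"

definition eigenbasis :: "nat \<Rightarrow> real^2 \<Rightarrow> ((int \<Rightarrow> complex) \<Rightarrow> (int \<Rightarrow> complex)) \<Rightarrow> (nat \<Rightarrow> int \<Rightarrow> complex) \<Rightarrow> bool" where
  "eigenbasis N \<kappa> U \<phi> \<longleftrightarrow>
     (\<forall>j\<in>{1..N}. inHN N \<kappa> (\<phi> j) \<and> (\<exists>ev. U (\<phi> j) = (\<lambda>k. ev * \<phi> j k))) \<and>
     (\<forall>i\<in>{1..N}. \<forall>j\<in>{1..N}. innerN N (\<phi> i) (\<phi> j) = (if i = j then 1 else 0))"

text \<open>p-moment V_p(N, T_N(n)); mu(e^{2 pi i (n wedge .)}) is 1 for n = 0 and 0 otherwise.\<close>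
definition Vp :: "nat \<Rightarrow> real^2 \<Rightarrow> (nat \<Rightarrow> int \<Rightarrow> complex) \<Rightarrow> real \<Rightarrow> int^2 \<Rightarrow> real" where
  "Vp N \<kappa> \<phi> p n = (1 / real N) * (\<Sum>j=1..N.
       cmod (innerN N (TN N \<kappa> n (\<phi> j)) (\<phi> j) - (if n = 0 then 1 else 0)) powr p)"

definition Sset :: "nat \<Rightarrow> real^2 \<Rightarrow> (nat \<Rightarrow> int \<Rightarrow> complex) \<Rightarrow> (int^2 \<Rightarrow> complex) \<Rightarrow> real \<Rightarrow> nat set" where
  "Sset N \<kappa> \<phi> c L = {j\<in>{1..N}.
      (SUP x. cmod (innerN N (OpN N \<kappa> (shift_coeff c x) (\<phi> j)) (\<phi> j) / mu (shift_coeff c x) - 1)) \<ge> L}"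

end

theory Submission
  imports Defs
begin

(* Since the eigenvectors are normalised, the zeroth Fourier mode of b = b^\<pm>_{x,r} contributes
   exactly \<mu>(b) = a(0) to <Op_N(b) \<phi>_j, \<phi>_j>, and translation by x only changes the phases of
   the other coefficients. So the normalised deviation is at most
   (max_n |a(n)| / |a(0)|) * \<Sum>_{1 \<le> |n| \<le> D} |<T_N(n) \<phi>_j, \<phi>_j>| uniformly in x, and for small r
   the ratio is at most 2 c0 / \<pi>, because a(0) = \<pi> r^2 + O(r/D) with 1/D = o(r). Raising this to
   the p-th power, the power-mean inequality over the at most 9 D^2 lattice points with |n| \<le> D
   and Chebyshev's inequality in j give the bound. *)

lemma powr_sum_le_card_powr_sum:
  fixes y :: "'a \<Rightarrow> real"
  assumes "finite B" and nonneg: "\<And>i. i \<in> B \<Longrightarrow> 0 \<le> y i" and "1 \<le> p"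
  shows "(\<Sum>i\<in>B. y i) powr p \<le> real (card B) powr (p - 1) * (\<Sum>i\<in>B. y i powr p)"
proof -
  define P where "P = {i\<in>B. y i \<noteq> 0}"
  have "finite P" "P \<subseteq> B" using \<open>finite B\<close> by (auto simp: P_def)
  have sum_P: "(\<Sum>i\<in>B. y i) = (\<Sum>i\<in>P. y i)" "(\<Sum>i\<in>B. y i powr p) = (\<Sum>i\<in>P. y i powr p)"
    using \<open>finite B\<close> by (auto simp: P_def intro: sum.mono_neutral_right)
  show ?thesis
  proof (cases "P = {}")
    case True
    then show ?thesis using sum_P by simp
  next
    case False
    \<comment> \<open>Jensen is applied to the nonzero terms only: \<open>powr_convex\<close> is convexity on \<open>{0<..}\<close>.\<close>
    define m where "m = real (card P)"
    have m: "0 < m" using False \<open>finite P\<close> by (simp add: m_def card_gt_0_iff)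
    have "y i \<in> {0<..}" if "i \<in> P" for i
      using that nonneg by (force simp: P_def)
    then have "(\<Sum>i\<in>P. (1/m) *\<^sub>R y i) powr p \<le> (\<Sum>i\<in>P. (1/m) * y i powr p)"
      using m by (intro convex_on_sum[OF \<open>finite P\<close> False powr_convex[OF \<open>1 \<le> p\<close>]]) (auto simp: m_def)
    then have jensen: "((\<Sum>i\<in>P. y i) / m) powr p \<le> (\<Sum>i\<in>P. y i powr p) / m"
      by (simp add: sum_divide_distrib)
    have "(\<Sum>i\<in>P. y i) powr p = m powr p * ((\<Sum>i\<in>P. y i) / m) powr p"
      using m nonneg \<open>P \<subseteq> B\<close> by (simp add: powr_divide sum_nonneg subset_iff)
    also have "\<dots> \<le> m powr p * ((\<Sum>i\<in>P. y i powr p) / m)"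
      by (rule mult_left_mono[OF jensen]) simp
    also have "\<dots> = m powr (p - 1) * (\<Sum>i\<in>P. y i powr p)"
      using m by (simp add: powr_diff)
    also have "\<dots> \<le> real (card B) powr (p - 1) * (\<Sum>i\<in>P. y i powr p)"
      using m \<open>1 \<le> p\<close> card_mono[OF \<open>finite B\<close> \<open>P \<subseteq> B\<close>]
      by (intro mult_right_mono powr_mono2 sum_nonneg) (auto simp: m_def)
    finally show ?thesis using sum_P by simp
  qed
qed

lemma abs_component_le_inorm: "\<bar>real_of_int (n$i)\<bar> \<le> inorm n"
proof -
  have "real_of_int (n$i)^2 \<le> real_of_int (n$1)^2 + real_of_int (n$2)^2"
    using exhaust_2[of i] by auto
  then show ?thesis
    unfolding inorm_def by (metis real_sqrt_abs real_sqrt_le_mono)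
qed

lemma one_le_inorm: "n \<noteq> 0 \<Longrightarrow> 1 \<le> inorm n"
proof -
  assume "n \<noteq> 0"
  then obtain i where "n$i \<noteq> 0" by (auto simp: vec_eq_iff)
  then show ?thesis using abs_component_le_inorm[of n i] by linarith
qed

lemma inorm_le_subset_box:
  "(\<lambda>n. (n$1, n$2)) ` {n::int^2. inorm n \<le> R} \<subseteq> {-\<lfloor>R\<rfloor>..\<lfloor>R\<rfloor>} \<times> {-\<lfloor>R\<rfloor>..\<lfloor>R\<rfloor>}"
proof -
  have "n$i \<le> \<lfloor>R\<rfloor> \<and> - (n$i) \<le> \<lfloor>R\<rfloor>" if "inorm n \<le> R" for n :: "int^2" and i
    using abs_component_le_inorm[of n i] that by (simp add: le_floor_iff abs_le_iff)
  then show ?thesis by (auto simp: minus_le_iff)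
qed

lemma inj_components: "inj (\<lambda>n::'a^2. (n$1, n$2))"
  by (rule injI) (simp add: vec_eq_iff forall_2)

lemma finite_inorm_le: "finite {n::int^2. inorm n \<le> R}"
  using inj_on_finite[OF inj_on_subset[OF inj_components] inorm_le_subset_box] by simp

lemma card_inorm_le:
  assumes "1 \<le> R"
  shows "real (card {n::int^2. inorm n \<le> R}) \<le> 9 * R^2"
proof -
  have "card {n::int^2. inorm n \<le> R} \<le> card ({-\<lfloor>R\<rfloor>..\<lfloor>R\<rfloor>} \<times> {-\<lfloor>R\<rfloor>..\<lfloor>R\<rfloor>})"
    by (rule card_inj_on_le[OF inj_on_subset[OF inj_components] inorm_le_subset_box]) auto
  also have "\<dots> = nat (2 * \<lfloor>R\<rfloor> + 1)^2"
    by (simp add: card_cartesian_product power2_eq_square)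
  finally have "real (card {n::int^2. inorm n \<le> R}) \<le> real (nat (2 * \<lfloor>R\<rfloor> + 1))^2"
    by (metis of_nat_le_iff of_nat_power)
  also have "real (nat (2 * \<lfloor>R\<rfloor> + 1)) = 2 * real_of_int \<lfloor>R\<rfloor> + 1"
    using assms by simp
  also have "(2 * real_of_int \<lfloor>R\<rfloor> + 1)^2 \<le> (3 * R)^2"
    using assms of_int_floor_le[of R] by (intro power_mono) linarith+
  finally show ?thesis by simp
qed

lemma innerN_OpN:
  assumes "finite (coeff_supp c)"
  shows "innerN N (OpN N \<kappa> c \<Psi>) \<Phi> = (\<Sum>n\<in>coeff_supp c. c n * innerN N (TN N \<kappa> n \<Psi>) \<Phi>)"
  unfolding innerN_def OpN_def
  by (simp add: sum_distrib_left sum_distrib_right sum.swap[of _ "coeff_supp c"] mult_ac)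

lemma Vp_nonzero:
  "n \<noteq> 0 \<Longrightarrow> Vp N \<kappa> \<phi> p n = (\<Sum>j=1..N. cmod (innerN N (TN N \<kappa> n (\<phi> j)) (\<phi> j)) powr p) / real N"
  by (simp add: Vp_def)

lemma chebyshev_card_bound:
  fixes t :: "'a \<Rightarrow> 'b \<Rightarrow> real"
  assumes "finite J" "S \<subseteq> J" "finite B" "0 < L" "1 \<le> p" "0 \<le> K"
    and nonneg: "\<And>j n. 0 \<le> t j n"
    and large: "\<And>j. j \<in> S \<Longrightarrow> L \<le> K * (\<Sum>n\<in>B. t j n)"
  shows "real (card S) * L powr p
           \<le> K powr p * real (card B) powr (p - 1) * (\<Sum>n\<in>B. \<Sum>j\<in>J. t j n powr p)"
proof -
  define C where "C = K powr p * real (card B) powr (p - 1)"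
  have pointwise: "L powr p \<le> C * (\<Sum>n\<in>B. t j n powr p)" if "j \<in> S" for j
  proof -
    have "L powr p \<le> (K * (\<Sum>n\<in>B. t j n)) powr p"
      using large[OF that] assms by (intro powr_mono2) auto
    also have "\<dots> = K powr p * (\<Sum>n\<in>B. t j n) powr p"
      using assms nonneg by (simp add: powr_mult sum_nonneg)
    also have "\<dots> \<le> C * (\<Sum>n\<in>B. t j n powr p)"
      unfolding C_def mult.assoc
      by (intro mult_left_mono powr_sum_le_card_powr_sum) (use assms nonneg in auto)
    finally show ?thesis .
  qed
  have "real (card S) * L powr p = (\<Sum>j\<in>S. L powr p)" by simp
  also have "\<dots> \<le> (\<Sum>j\<in>S. C * (\<Sum>n\<in>B. t j n powr p))"
    by (rule sum_mono) (rule pointwise)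
  also have "\<dots> \<le> (\<Sum>j\<in>J. C * (\<Sum>n\<in>B. t j n powr p))"
    using assms by (intro sum_mono2) (auto simp: C_def intro!: mult_nonneg_nonneg sum_nonneg)
  also have "\<dots> = C * (\<Sum>n\<in>B. \<Sum>j\<in>J. t j n powr p)"
    by (simp add: sum_distrib_left sum.swap[of _ J])
  finally show ?thesis by (simp add: C_def)
qed

lemma deviation_le_sum_matrix_elements:
  assumes "finite B" and supp: "coeff_supp a - {0} \<subseteq> B" and "a 0 \<noteq> 0"
    and normalized: "innerN N \<Psi> \<Psi> = 1" and bound: "\<And>n. cmod (a n) \<le> A"
  shows "cmod (innerN N (OpN N \<kappa> (shift_coeff a x) \<Psi>) \<Psi> / mu (shift_coeff a x) - 1)
           \<le> A / cmod (a 0) * (\<Sum>n\<in>B. cmod (innerN N (TN N \<kappa> n \<Psi>) \<Psi>))"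
proof -
  define s where "s = shift_coeff a x"
  define t where "t n = innerN N (TN N \<kappa> n \<Psi>) \<Psi>" for n
  define R where "R = (\<Sum>n\<in>coeff_supp a - {0}. s n * t n)"
  have fin: "finite (coeff_supp a)"
    using \<open>finite B\<close> supp finite_subset[of "coeff_supp a" "insert 0 B"] by blast
  have "0 \<in> coeff_supp a" using \<open>a 0 \<noteq> 0\<close> by (simp add: coeff_supp_def)
  have s0: "s 0 = a 0" by (simp add: s_def shift_coeff_def wedge_def)
  have norm_s: "cmod (s n) = cmod (a n)" for n
    by (simp add: s_def shift_coeff_def norm_mult norm_exp_eq_Re)
  have "innerN N (OpN N \<kappa> s \<Psi>) \<Psi> = (\<Sum>n\<in>coeff_supp a. s n * t n)"
    using innerN_OpN[of s N \<kappa> \<Psi> \<Psi>] fin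
    by (simp add: t_def s_def coeff_supp_def shift_coeff_def)
  also have "\<dots> = s 0 * t 0 + R"
    unfolding R_def by (rule sum.remove[OF fin \<open>0 \<in> coeff_supp a\<close>])
  also have "\<dots> = a 0 + R"
    using s0 normalized by (simp add: t_def TN_def)
  finally have deviation: "innerN N (OpN N \<kappa> s \<Psi>) \<Psi> / mu s - 1 = R / a 0"
    using \<open>a 0 \<noteq> 0\<close> s0 by (simp add: mu_def field_simps)
  have "cmod R \<le> A * (\<Sum>n\<in>B. cmod (t n))"
  proof -
    have "cmod R \<le> (\<Sum>n\<in>coeff_supp a - {0}. cmod (s n * t n))"
      unfolding R_def by (rule norm_sum)
    also have "\<dots> \<le> (\<Sum>n\<in>coeff_supp a - {0}. A * cmod (t n))"
      unfolding norm_mult norm_s by (intro sum_mono mult_right_mono bound) simp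
    also have "\<dots> \<le> (\<Sum>n\<in>B. A * cmod (t n))"
      using order_trans[OF norm_ge_zero bound] by (intro sum_mono2 \<open>finite B\<close> supp) auto
    finally show ?thesis by (simp add: sum_distrib_left)
  qed
  with deviation \<open>a 0 \<noteq> 0\<close> show ?thesis
    unfolding s_def t_def by (simp add: norm_divide divide_right_mono)
qed

lemma card_Sset_le:
  assumes "1 \<le> p" "1 \<le> N" and normalized: "\<forall>j\<in>{1..N}. innerN N (\<phi> j) (\<phi> j) = 1"
    and "0 < L" "1 \<le> R" "0 < m" "m \<le> cmod (a 0)"
    and bound: "\<And>n. cmod (a n) \<le> A" and supp: "\<And>n. R \<le> inorm n \<Longrightarrow> a n = 0"
  shows "real (card (Sset N \<kappa> \<phi> a L)) / real N
           \<le> (A / m) powr p * 9 powr (p - 1) * R powr (2 * (p - 1)) / L powr p *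
             (\<Sum>n\<in>{n::int^2. 1 \<le> inorm n \<and> inorm n \<le> R}. Vp N \<kappa> \<phi> p n)"
proof -
  define B where "B = {n::int^2. 1 \<le> inorm n \<and> inorm n \<le> R}"
  define t where "t j n = cmod (innerN N (TN N \<kappa> n (\<phi> j)) (\<phi> j))" for j n
  define S where "S = Sset N \<kappa> \<phi> a L"
  have "finite B" unfolding B_def by (rule finite_subset[OF _ finite_inorm_le]) auto
  have card_B: "real (card B) \<le> 9 * R^2"
    using card_inorm_le[OF \<open>1 \<le> R\<close>] card_mono[OF finite_inorm_le, of B R]
    by (force simp: B_def)
  have "coeff_supp a - {0} \<subseteq> B"
    using supp one_le_inorm by (force simp: B_def coeff_supp_def)
  have "0 \<le> A" "a 0 \<noteq> 0" using bound[of 0] \<open>0 < m\<close> \<open>m \<le> cmod (a 0)\<close> by auto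
  have "S \<subseteq> {1..N}" by (auto simp: S_def Sset_def)
  have large: "L \<le> A / m * (\<Sum>n\<in>B. t j n)" if "j \<in> S" for j
  proof -
    have j: "j \<in> {1..N}" using that \<open>S \<subseteq> {1..N}\<close> by blast
    have "L \<le> (SUP x. cmod (innerN N (OpN N \<kappa> (shift_coeff a x) (\<phi> j)) (\<phi> j)
                                / mu (shift_coeff a x) - 1))"
      using that by (auto simp: S_def Sset_def)
    also have "\<dots> \<le> A / cmod (a 0) * (\<Sum>n\<in>B. t j n)"
      using deviation_le_sum_matrix_elements[OF \<open>finite B\<close> \<open>coeff_supp a - {0} \<subseteq> B\<close> \<open>a 0 \<noteq> 0\<close> _ bound]
        normalized j
      by (intro cSUP_least) (auto simp: t_def)
    also have "\<dots> \<le> A / m * (\<Sum>n\<in>B. t j n)"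
      using \<open>0 \<le> A\<close> \<open>0 < m\<close> \<open>m \<le> cmod (a 0)\<close>
      by (intro mult_right_mono divide_left_mono sum_nonneg mult_pos_pos) (auto simp: t_def)
    finally show ?thesis .
  qed
  have "real (card S) * L powr p
          \<le> (A / m) powr p * real (card B) powr (p - 1) * (\<Sum>n\<in>B. \<Sum>j=1..N. t j n powr p)"
    using large assms \<open>S \<subseteq> {1..N}\<close> \<open>finite B\<close> \<open>0 \<le> A\<close>
    by (intro chebyshev_card_bound) (auto simp: t_def)
  also have "\<dots> \<le> (A / m) powr p * (9 powr (p - 1) * R powr (2 * (p - 1))) *
                     (\<Sum>n\<in>B. \<Sum>j=1..N. t j n powr p)"
  proof (intro mult_right_mono mult_left_mono)
    have "real (card B) powr (p - 1) \<le> (9 * R^2) powr (p - 1)"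
      using card_B \<open>1 \<le> p\<close> by (intro powr_mono2) auto
    also have "\<dots> = 9 powr (p - 1) * R powr (2 * (p - 1))"
      using \<open>1 \<le> R\<close> by (simp add: powr_mult powr_powr flip: powr_numeral)
    finally show "real (card B) powr (p - 1) \<le> 9 powr (p - 1) * R powr (2 * (p - 1))" .
  qed (auto simp: t_def intro!: sum_nonneg)
  also have "(\<Sum>n\<in>B. \<Sum>j=1..N. t j n powr p) = real N * (\<Sum>n\<in>B. Vp N \<kappa> \<phi> p n)"
  proof -
    have "(\<Sum>j=1..N. t j n powr p) = real N * Vp N \<kappa> \<phi> p n" if "n \<in> B" for n
    proof -
      have "n \<noteq> 0" using that by (auto simp: B_def inorm_def)
      then show ?thesis using \<open>1 \<le> N\<close> by (simp add: t_def Vp_nonzero)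
    qed
    then show ?thesis by (simp add: sum_distrib_left)
  qed
  finally show ?thesis
    using \<open>1 \<le> N\<close> \<open>0 < L\<close> by (simp add: S_def B_def field_simps)
qed

lemma majorant_family_eventually:
  assumes D_pos: "\<forall>r>0. 0 < D r" and D_large: "(\<lambda>r. 1 / D r) \<in> o[at_right 0](\<lambda>r. r)"
    and family: "majorant_family c0 C1 D ap am"
  shows "\<forall>\<^sub>F r in at_right 0. 0 < r \<and> 1 \<le> D r \<and> (\<forall>a\<in>{ap r, am r}.
           pi * r^2 / 2 \<le> cmod (a 0) \<and> (\<forall>n. cmod (a n) \<le> c0 * r^2) \<and> (\<forall>n. D r \<le> inorm n \<longrightarrow> a n = 0))"
proof -
  \<comment> \<open>Small enough that the error \<open>C1 r / D r \<le> \<bar>C1\<bar> e r\<^sup>2\<close> in \<open>a 0 \<approx> \<pi> r\<^sup>2\<close> stays below \<open>\<pi> r\<^sup>2 / 2\<close>.\<close>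
  define e where "e = pi / (2 * (\<bar>C1\<bar> + 1))"
  have "0 < e" by (simp add: e_def add_pos_nonneg)
  have "\<forall>\<^sub>F r in at_right 0. norm (1 / D r) \<le> 1 * norm r"
    using landau_o.smallD[OF D_large, of 1] by simp
  moreover have "\<forall>\<^sub>F r in at_right 0. norm (1 / D r) \<le> e * norm r"
    using landau_o.smallD[OF D_large \<open>0 < e\<close>] .
  moreover have "\<forall>\<^sub>F r in at_right (0::real). 0 < r \<and> r \<le> 1/2"
    by (rule eventually_at_rightI[of 0 "1/2"]) auto
  ultimately show ?thesis
  proof eventually_elim
    case (elim r)
    then have "0 < r" "r \<le> 1/2" "0 < D r" using D_pos by auto
    then have "1 / D r \<le> r" "1 / D r \<le> e * r" using elim by auto
    have "1 \<le> r * D r" using \<open>1 / D r \<le> r\<close> \<open>0 < D r\<close> by (simp add: field_simps)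
    have "1 \<le> D r"
      using \<open>1 \<le> r * D r\<close> \<open>r \<le> 1/2\<close> \<open>0 < D r\<close> mult_right_mono[of r "1/2" "D r"] by linarith
    have "C1 * r / D r \<le> \<bar>C1\<bar> * (r * (1 / D r))"
      using mult_right_mono[OF abs_ge_self[of C1], of "r * (1 / D r)"] \<open>0 < r\<close> \<open>0 < D r\<close> by simp
    also have "\<dots> \<le> \<bar>C1\<bar> * (r * (e * r))"
      using \<open>1 / D r \<le> e * r\<close> \<open>0 < r\<close> by (intro mult_left_mono) auto
    also have "\<dots> \<le> pi * r^2 / 2"
      using \<open>0 < r\<close> by (simp add: e_def power2_eq_square field_simps)
    finally have error_small: "C1 * r / D r \<le> pi * r^2 / 2" .
    have "pi * r^2 / 2 \<le> cmod z" if "cmod (z - complex_of_real (pi * r^2)) \<le> C1 * r / D r" for z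
    proof -
      have "cmod (complex_of_real (pi * r^2)) = pi * r^2"
        by (simp only: norm_of_real) simp
      then show ?thesis
        using that error_small norm_triangle_ineq2[of "complex_of_real (pi * r^2)" z]
          norm_minus_commute[of z "complex_of_real (pi * r^2)"] by linarith
    qed
    then show ?case
      using family \<open>0 < r\<close> \<open>r \<le> 1/2\<close> \<open>1 \<le> r * D r\<close> \<open>1 \<le> D r\<close>
      unfolding majorant_family_def by auto
  qed
qed

lemma eigenbasis_normalized:
  "eigenbasis N \<kappa> U \<phi> \<Longrightarrow> \<forall>j\<in>{1..N}. innerN N (\<phi> j) (\<phi> j) = 1"
  by (simp add: eigenbasis_def)

lemma eventually_card_Sset_le:
  assumes "1 \<le> p" and "\<forall>r>0. 0 < D r" and "(\<lambda>r. 1 / D r) \<in> o[at_right 0](\<lambda>r. r)"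
    and "majorant_family c0 C1 D ap am"
  shows "\<forall>\<^sub>F r in at_right 0. \<forall>N \<kappa> \<phi> L a.
           1 \<le> N \<longrightarrow> (\<forall>j\<in>{1..N}. innerN N (\<phi> j) (\<phi> j) = 1) \<longrightarrow> 0 < L \<longrightarrow> a \<in> {ap r, am r} \<longrightarrow>
           real (card (Sset N \<kappa> \<phi> a L)) / real N
             \<le> (2 * max c0 1 / pi) powr p * 9 powr (p - 1) * D r powr (2 * (p - 1)) / L powr p *
               (\<Sum>n\<in>{n::int^2. 1 \<le> inorm n \<and> inorm n \<le> D r}. Vp N \<kappa> \<phi> p n)"
  using majorant_family_eventually[OF assms(2-)]
proof (rule eventually_mono, intro allI impI)
  fix r L :: real and N :: nat and \<kappa> \<phi> a
  assume r: "0 < r \<and> 1 \<le> D r \<and> (\<forall>a\<in>{ap r, am r}.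
      pi * r^2 / 2 \<le> cmod (a 0) \<and> (\<forall>n. cmod (a n) \<le> c0 * r^2) \<and> (\<forall>n. D r \<le> inorm n \<longrightarrow> a n = 0))"
    and "1 \<le> N" and normalized: "\<forall>j\<in>{1..N}. innerN N (\<phi> j) (\<phi> j) = 1"
    and "0 < L" and "a \<in> {ap r, am r}"
  then have "0 < r" "1 \<le> D r" "pi * r^2 / 2 \<le> cmod (a 0)" "\<And>n. D r \<le> inorm n \<Longrightarrow> a n = 0"
    and "cmod (a n) \<le> c0 * r^2" for n
    by auto
  moreover have "cmod (a n) \<le> max c0 1 * r^2" for n
    using \<open>cmod (a n) \<le> c0 * r^2\<close> by (rule order_trans) (simp add: mult_right_mono)
  ultimately have "real (card (Sset N \<kappa> \<phi> a L)) / real N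
      \<le> (max c0 1 * r^2 / (pi * r^2 / 2)) powr p * 9 powr (p - 1) * D r powr (2 * (p - 1)) / L powr p *
        (\<Sum>n\<in>{n::int^2. 1 \<le> inorm n \<and> inorm n \<le> D r}. Vp N \<kappa> \<phi> p n)"
    by (intro card_Sset_le[OF assms(1) \<open>1 \<le> N\<close> normalized \<open>0 < L\<close>]) auto
  moreover have "max c0 1 * r^2 / (pi * r^2 / 2) = 2 * max c0 1 / pi"
    using \<open>0 < r\<close> by (simp add: field_simps)
  ultimately show "real (card (Sset N \<kappa> \<phi> a L)) / real N
      \<le> (2 * max c0 1 / pi) powr p * 9 powr (p - 1) * D r powr (2 * (p - 1)) / L powr p *
        (\<Sum>n\<in>{n::int^2. 1 \<le> inorm n \<and> inorm n \<le> D r}. Vp N \<kappa> \<phi> p n)"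
    by simp
qed

theorem lemma3p3:
  fixes c0 C1 :: real
  shows "\<forall>p::real. 1 \<le> p \<longrightarrow> (\<exists>c>0. \<forall>(D::real \<Rightarrow> real) ap am.
           (\<forall>r>0. D r > 0) \<and> (\<lambda>r. 1 / D r) \<in> o[at_right 0](\<lambda>r. r) \<and>
           majorant_family c0 C1 D ap am \<longrightarrow>
           (\<forall>\<^sub>F r in at_right 0. \<forall>(N::nat) (\<kappa>::real^2) (M::int^2^2) U \<phi> (L::real).
              1 \<le> N \<and> hyperbolic_SL2Z M \<and> quantizes N \<kappa> M U \<and> eigenbasis N \<kappa> U \<phi> \<and> 0 < L \<longrightarrow>
              (\<forall>a\<in>{ap r, am r}.
                 real (card (Sset N \<kappa> \<phi> a L)) / real N
                   \<le> c * D r powr (2 * (p - 1)) / L powr p *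
                     (\<Sum>n\<in>{n::int^2. 1 \<le> inorm n \<and> inorm n \<le> D r}. Vp N \<kappa> \<phi> p n))))"
  apply (intro allI impI)
  subgoal for p
    apply (intro exI[of _ "(2 * max c0 1 / pi) powr p * 9 powr (p - 1)"] conjI allI impI)
    subgoal by simp
    subgoal for D ap am
      by (rule eventually_mono[OF eventually_card_Sset_le[of p D c0 C1 ap am]])
        (blast dest: eigenbasis_normalized)+
    done
  done

end
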